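(* Let $p=11$ and let $0\le i\le 9$ with $i\ne5$. Then $F_i(\mathbb{Z}_{11})=(F(i)\bmod 11)+11\mathbb{Z}_{11}$, where $$F_i(x)=\sum_{m\ge0}\frac{\left(\omega(\phi)^i-(-1)^m\omega(\bar\phi)^i\right)\left(\log_{11}\frac{\phi}{\omega(\phi)}\right)^m}{m!\,\sqrt5}\,x^m\quad(x\in\mathbb{Z}_{11}).$$
   Context: $F(n)$ is the Fibonacci sequence ($F(0)=0,F(1)=1,F(n+2)=F(n+1)+F(n)$). Since $11\equiv1\pmod5$, the polynomial $x^2-x-1$ has two roots $\phi,\bar\phi\in\mathbb{Z}_{11}$; $\sqrt5:=2\phi-1$. For $x\in\mathbb{Z}_{11}\setminus11\mathbb{Z}_{11}$, $\omega(x)$ is the unique $10$th root of unity in $\mathbb{Z}_{11}$ congruent to $x$ modulo $11$. $\log_{11}y=\sum_{m\ge1}(-1)^{m+1}(y-1)^m/m$ is the $11$-adic logarithm. $F(i)\bmod 11$ denotes the least nonnegative residue. *)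

theory Defs
  imports Main "HOL-Number_Theory.Fib"
begin

text \<open>p-adic integers Z_p, represented as coherent sequences of residues:
  x n is the least nonnegative residue of x modulo p^n.\<close>

definition Zp :: "int \<Rightarrow> (nat \<Rightarrow> int) set" where
  "Zp p = {x. \<forall>n. x n = x (Suc n) mod p ^ n}"

definition zp_of_int :: "int \<Rightarrow> int \<Rightarrow> (nat \<Rightarrow> int)" where
  "zp_of_int p a = (\<lambda>n. a mod p ^ n)"

definition zp_add :: "int \<Rightarrow> (nat \<Rightarrow> int) \<Rightarrow> (nat \<Rightarrow> int) \<Rightarrow> (nat \<Rightarrow> int)" where
  "zp_add p x y = (\<lambda>n. (x n + y n) mod p ^ n)"

definition zp_neg :: "int \<Rightarrow> (nat \<Rightarrow> int) \<Rightarrow> (nat \<Rightarrow> int)" where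
  "zp_neg p x = (\<lambda>n. (- x n) mod p ^ n)"

definition zp_sub :: "int \<Rightarrow> (nat \<Rightarrow> int) \<Rightarrow> (nat \<Rightarrow> int) \<Rightarrow> (nat \<Rightarrow> int)" where
  "zp_sub p x y = zp_add p x (zp_neg p y)"

definition zp_mult :: "int \<Rightarrow> (nat \<Rightarrow> int) \<Rightarrow> (nat \<Rightarrow> int) \<Rightarrow> (nat \<Rightarrow> int)" where
  "zp_mult p x y = (\<lambda>n. (x n * y n) mod p ^ n)"

definition zp_pow :: "int \<Rightarrow> (nat \<Rightarrow> int) \<Rightarrow> nat \<Rightarrow> (nat \<Rightarrow> int)" where
  "zp_pow p x k = (\<lambda>n. (x n ^ k) mod p ^ n)"

definition zp_sum :: "int \<Rightarrow> ('a \<Rightarrow> nat \<Rightarrow> int) \<Rightarrow> 'a set \<Rightarrow> (nat \<Rightarrow> int)" where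
  "zp_sum p f A = (\<lambda>n. (\<Sum>a\<in>A. f a n) mod p ^ n)"

definition zp_lim :: "(nat \<Rightarrow> nat \<Rightarrow> int) \<Rightarrow> (nat \<Rightarrow> int) \<Rightarrow> bool" where
  "zp_lim s z = (\<forall>n. \<exists>K. \<forall>k\<ge>K. s k n = z n)"

definition zp_sums :: "int \<Rightarrow> (nat \<Rightarrow> nat \<Rightarrow> int) \<Rightarrow> (nat \<Rightarrow> int) \<Rightarrow> bool" where
  "zp_sums p f z = zp_lim (\<lambda>K. zp_sum p f {..<K}) z"

text \<open>Exact quotient a / b (in Q_p), used only where it lies in Z_p.\<close>
definition zp_div :: "int \<Rightarrow> (nat \<Rightarrow> int) \<Rightarrow> (nat \<Rightarrow> int) \<Rightarrow> (nat \<Rightarrow> int)" where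
  "zp_div p a b = (THE y. y \<in> Zp p \<and> zp_mult p b y = a)"

definition teich :: "int \<Rightarrow> (nat \<Rightarrow> int) \<Rightarrow> (nat \<Rightarrow> int)" where
  "teich p x = (THE w. w \<in> Zp p \<and> zp_pow p w (nat (p - 1)) = zp_of_int p 1 \<and> w 1 = x 1)"

text \<open>p-adic logarithm: sum over m \<ge> 1 of (-1)^(m+1) (y-1)^m / m (index k = m - 1).\<close>
definition zp_log :: "int \<Rightarrow> (nat \<Rightarrow> int) \<Rightarrow> (nat \<Rightarrow> int)" where
  "zp_log p y = (THE z. zp_sums p (\<lambda>k. zp_div p
      (zp_mult p (zp_of_int p ((-1) ^ k)) (zp_pow p (zp_sub p y (zp_of_int p 1)) (Suc k)))
      (zp_of_int p (int (Suc k)))) z)"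

text \<open>m-th term of F_i(x), with phi, phi' the two roots of x^2-x-1, sqrt5 = 2 phi - 1.\<close>
definition fib_term :: "int \<Rightarrow> nat \<Rightarrow> (nat \<Rightarrow> int) \<Rightarrow> (nat \<Rightarrow> int) \<Rightarrow> (nat \<Rightarrow> int) \<Rightarrow> nat \<Rightarrow> (nat \<Rightarrow> int)" where
  "fib_term p i \<phi> \<phi>' x m =
     zp_mult p
       (zp_div p
         (zp_mult p
           (zp_sub p (zp_pow p (teich p \<phi>) i)
                     (zp_mult p (zp_of_int p ((-1) ^ m)) (zp_pow p (teich p \<phi>') i)))
           (zp_pow p (zp_log p (zp_div p \<phi> (teich p \<phi>))) m))
         (zp_mult p (zp_of_int p (int (fact m)))
                    (zp_sub p (zp_mult p (zp_of_int p 2) \<phi>) (zp_of_int p 1))))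
       (zp_pow p x m)"

end

(*
  The coefficients a_m of F_i lie in Z_11 and satisfy: a_0 = F(i) mod 11, since by Binet
  F(i) * (2 phi - 1) = phi^i - phibar^i modulo 11; a_1 = 11 * (unit), because
  log(phi / omega(phi)) = 11 * (unit) and omega(phi)^i + omega(phibar)^i is congruent to the
  Lucas number L(i), which is prime to 11 for i <> 5; and a_m has valuation at least
  m - v_11(m!) >= 2 for m >= 2.  For such a series F(x) - F(y) = (x - y)(a_1 + O(121)), so
  F(x) mod 11^(k+1) depends only on x mod 11^k, and injectively; counting residues then shows
  that F maps Z_11 onto a_0 + 11 Z_11.
*)

theory Submission
  imports Defs "HOL-Number_Theory.Number_Theory"
begin

lemma zp_sums_unique: "zp_sums p f z \<Longrightarrow> zp_sums p f z' \<Longrightarrow> z = z'"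
  unfolding zp_sums_def zp_lim_def
proof
  fix n
  assume "\<forall>n. \<exists>K. \<forall>k\<ge>K. zp_sum p f {..<k} n = z n" "\<forall>n. \<exists>K. \<forall>k\<ge>K. zp_sum p f {..<k} n = z' n"
  then obtain K K' where "\<forall>k\<ge>K. zp_sum p f {..<k} n = z n" "\<forall>k\<ge>K'. zp_sum p f {..<k} n = z' n"
    by blast
  then show "z n = z' n" by (metis max.cobounded1 max.cobounded2)
qed

lemma sum_mod_eq_truncated:
  fixes B K :: nat
  assumes "\<And>k. B \<le> k \<Longrightarrow> f k mod (m :: int) = 0" and "B \<le> K"
  shows "(\<Sum>k<K. f k) mod m = (\<Sum>k<B. f k) mod m"
proof -
  have "(\<Sum>k<K. f k mod m) = (\<Sum>k<B. f k mod m)"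
    using assms by (intro sum.mono_neutral_right) (auto simp: not_less)
  then show ?thesis by (metis mod_sum_eq)
qed

lemma sum_lessThan_split_01:
  fixes N :: nat and g :: "nat \<Rightarrow> 'a :: comm_monoid_add"
  assumes "2 \<le> N"
  shows "(\<Sum>m<N. g m) = g 0 + g 1 + (\<Sum>m\<in>{2..<N}. g m)"
proof -
  from assms have "{..<N} = {0, 1} \<union> {2..<N}" by auto
  then show ?thesis by (simp add: sum.union_disjoint add.assoc)
qed

lemma sum_powers_diff_factor:
  fixes r s :: "'a :: comm_ring_1"
  shows "(\<Sum>m<N. c m * r ^ m) - (\<Sum>m<N. c m * s ^ m)
    = (r - s) * (\<Sum>m<N. c m * (\<Sum>j<m. s ^ (m - Suc j) * r ^ j))"
  by (simp add: sum_subtractf[symmetric] right_diff_distrib[symmetric] power_diff_sumr2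
      sum_distrib_left mult_ac)

lemma eq_of_dvd_diff_bounded:
  "0 \<le> (r :: int) \<Longrightarrow> r < M \<Longrightarrow> 0 \<le> s \<Longrightarrow> s < M \<Longrightarrow> M dvd r - s \<Longrightarrow> r = s"
  by (metis mod_eq_dvd_iff mod_pos_pos_trivial)

lemma zp_mult_assoc: "zp_mult p (zp_mult p x y) z = zp_mult p x (zp_mult p y z)"
  unfolding zp_mult_def by (simp add: mod_mult_left_eq mod_mult_right_eq mult.assoc)

lemma zp_pow_0: "zp_pow p x 0 = zp_of_int p 1"
  by (simp add: zp_pow_def zp_of_int_def)

locale prime_zp =
  fixes p :: int
  assumes prime_p: "prime p"
begin

lemma p_gt_1 [simp]: "1 < p"
  using prime_p by (simp add: prime_gt_1_int)

lemma p_pos [simp]: "0 < p"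
  using p_gt_1 by linarith

lemma p_nonzero [simp]: "p \<noteq> 0"
  using p_pos by linarith

lemma p_neq_1 [simp]: "p \<noteq> 1"
  using p_gt_1 by linarith

lemma abs_p [simp]: "\<bar>p\<bar> = p"
  using p_pos by (rule abs_of_pos)

lemma p_power_dvd_mono: "k \<le> n \<Longrightarrow> p ^ k dvd p ^ n"
  by (rule le_imp_power_dvd)

lemma Zp_level: "x \<in> Zp p \<Longrightarrow> x n = x (Suc n) mod p ^ n"
  unfolding Zp_def by blast

lemma Zp_range: "x \<in> Zp p \<Longrightarrow> 0 \<le> x n \<and> x n < p ^ n"
  using Zp_level[of x n] by simp

lemma Zp_mod_self [simp]: "x \<in> Zp p \<Longrightarrow> x n mod p ^ n = x n"
  using Zp_range[of x n] by simp

lemma Zp_mod_coherent: assumes x: "x \<in> Zp p" and "k \<le> n" shows "x n mod p ^ k = x k"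
  using \<open>k \<le> n\<close>
proof (induction n rule: dec_induct)
  case (step n)
  have "x n = x (Suc n) mod p ^ n" using Zp_level[OF x] .
  then show ?case using step p_power_dvd_mono[of k n] by (simp add: mod_mod_cancel)
qed (use x in simp)

lemma Zp_cong_coherent: "x \<in> Zp p \<Longrightarrow> k \<le> n \<Longrightarrow> [x n = x k] (mod p ^ k)"
  using Zp_mod_coherent[of x k n] by (simp add: cong_def)

lemma Zp_cong_level_1: "x \<in> Zp p \<Longrightarrow> 1 \<le> n \<Longrightarrow> [x n = x 1] (mod p)"
  using Zp_cong_coherent[of x 1 n] by simp

lemma Zp_eq_levelI: "x \<in> Zp p \<Longrightarrow> y \<in> Zp p \<Longrightarrow> [x n = y n] (mod p ^ n) \<Longrightarrow> x n = y n"
  by (metis Zp_mod_self cong_def)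

lemma Zp_eqI:
  assumes "x \<in> Zp p" "y \<in> Zp p" "\<And>n. [x n = y n] (mod p ^ n)"
  shows "x = y"
  using Zp_eq_levelI[OF assms(1,2) assms(3)] by blast

lemma Zp_memI:
  assumes "\<And>n. x n mod p ^ n = x n" "\<And>n. [x (Suc n) = x n] (mod p ^ n)"
  shows "x \<in> Zp p"
  unfolding Zp_def
proof (intro CollectI allI)
  fix n
  show "x n = x (Suc n) mod p ^ n"
    using assms(1)[of n] assms(2)[of n] by (simp add: cong_def)
qed

lemma Zp_reduce_memI:
  assumes "\<And>n. [f (Suc n) = f n] (mod p ^ n)"
  shows "(\<lambda>n. f n mod p ^ n) \<in> Zp p"
proof (rule Zp_memI)
  fix n
  have "f (Suc n) mod p ^ Suc n mod p ^ n = f (Suc n) mod p ^ n"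
    by (rule mod_mod_cancel) (simp add: p_power_dvd_mono)
  then show "[f (Suc n) mod p ^ Suc n = f n mod p ^ n] (mod p ^ n)"
    using assms[of n] unfolding cong_def by simp
qed simp

lemma Zp_cong_Suc: "x \<in> Zp p \<Longrightarrow> [x (Suc n) = x n] (mod p ^ n)"
  by (rule Zp_cong_coherent) auto

lemma zp_sub_apply: "zp_sub p x y n = (x n - y n) mod p ^ n"
  by (simp add: zp_sub_def zp_add_def zp_neg_def mod_simps)

lemmas zp_apply = zp_of_int_def zp_add_def zp_sub_apply zp_mult_def zp_pow_def

lemma zp_of_int_mem [simp]: "zp_of_int p a \<in> Zp p"
  unfolding zp_of_int_def using Zp_reduce_memI[of "\<lambda>n. a"] by simp

lemma zp_sub_mem [simp]: "x \<in> Zp p \<Longrightarrow> y \<in> Zp p \<Longrightarrow> zp_sub p x y \<in> Zp p"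
  unfolding zp_sub_apply[abs_def] by (rule Zp_reduce_memI) (intro cong_diff Zp_cong_Suc)

lemma zp_mult_mem [simp]: "x \<in> Zp p \<Longrightarrow> y \<in> Zp p \<Longrightarrow> zp_mult p x y \<in> Zp p"
  unfolding zp_mult_def by (rule Zp_reduce_memI) (intro cong_mult Zp_cong_Suc)

lemma zp_pow_mem [simp]: "x \<in> Zp p \<Longrightarrow> zp_pow p x k \<in> Zp p"
  unfolding zp_pow_def by (rule Zp_reduce_memI) (intro cong_pow Zp_cong_Suc)

lemma coprime_p_power: "\<not> p dvd a \<Longrightarrow> coprime a (p ^ n)"
  using prime_imp_coprime[OF prime_p] by (simp add: coprime_commute)

lemma p_power_dvd_cancel: "p ^ n dvd a * b \<Longrightarrow> \<not> p dvd b \<Longrightarrow> p ^ n dvd a"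
  using coprime_p_power[of b n] by (simp add: coprime_commute coprime_dvd_mult_left_iff)

lemma Zp_unit_level: "x \<in> Zp p \<Longrightarrow> \<not> p dvd x 1 \<Longrightarrow> 1 \<le> n \<Longrightarrow> \<not> p dvd x n"
  using Zp_cong_level_1 cong_dvd_iff by blast

lemma not_dvd_of_cong_mult_1: "[a * b = 1] (mod p) \<Longrightarrow> \<not> p dvd b"
proof
  assume "[a * b = 1] (mod p)" "p dvd b"
  then have "p dvd 1" using cong_dvd_iff by fastforce
  then show False using p_gt_1 zdvd_imp_le by fastforce
qed

lemma zp_unit_inverse:
  assumes s: "s \<in> Zp p" and unit: "\<not> p dvd s 1"
  obtains t where "t \<in> Zp p" "\<And>n. [s n * t n = 1] (mod p ^ n)"
proof -
  have coprime: "coprime (s n) (p ^ n)" for n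
    using Zp_unit_level[OF s unit, of n] coprime_p_power[of "s n" n] by (cases "n = 0") auto
  define t where "t n = (SOME w. [s n * w = 1] (mod p ^ n)) mod p ^ n" for n
  have inverse: "[s n * t n = 1] (mod p ^ n)" for n
  proof -
    have "\<exists>w. [s n * w = 1] (mod p ^ n)"
      using coprime[of n] by (rule cong_solve_coprime_int)
    from someI_ex[OF this] show ?thesis
      unfolding t_def by (simp add: cong_def mod_simps)
  qed
  have "t \<in> Zp p"
  proof (rule Zp_memI)
    fix n
    have "[s n * t (Suc n) = s (Suc n) * t (Suc n)] (mod p ^ n)"
      using Zp_cong_Suc[OF s, of n] by (simp add: cong_mult cong_sym)
    also have "[s (Suc n) * t (Suc n) = 1] (mod p ^ n)"
      using inverse[of "Suc n"] by (rule cong_dvd_modulus) (simp add: p_power_dvd_mono)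
    also have "[1 = s n * t n] (mod p ^ n)"
      using inverse[of n] by (rule cong_sym)
    finally show "[t (Suc n) = t n] (mod p ^ n)"
      using coprime[of n] cong_mult_lcancel by blast
  qed (simp add: t_def)
  with inverse that show ?thesis by blast
qed

lemma p_power_dvd_mult_cancel:
  "p ^ (k + N) dvd g * d \<Longrightarrow> \<not> p ^ N dvd g \<Longrightarrow> p ^ Suc k dvd d"
proof (induction N arbitrary: g)
  case (Suc N)
  show ?case
  proof (cases "p dvd g")
    case False
    then have "p ^ (k + Suc N) dvd d"
      using Suc.prems(1) p_power_dvd_cancel[of "k + Suc N" d g] by (simp add: mult.commute)
    then show ?thesis
      by (rule dvd_trans[rotated]) (simp add: p_power_dvd_mono)
  next
    case True
    then obtain g' where "g = p * g'" by blast
    with Suc.prems show ?thesis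
      using Suc.IH[of g'] by (simp add: mult.assoc)
  qed
qed simp

lemma zp_mult_left_cancel:
  assumes b: "b \<in> Zp p" and y: "y \<in> Zp p" and y': "y' \<in> Zp p" and nonzero: "b N \<noteq> 0"
    and eq: "zp_mult p b y = zp_mult p b y'"
  shows "y = y'"
proof
  fix n
  let ?M = "n + N"
  have "[b ?M * y ?M = b ?M * y' ?M] (mod p ^ ?M)"
    using fun_cong[OF eq, of ?M] by (simp add: zp_mult_def cong_def)
  then have "p ^ ?M dvd b ?M * (y ?M - y' ?M)"
    by (simp add: cong_iff_dvd_diff right_diff_distrib)
  moreover have "\<not> p ^ N dvd b ?M"
    using Zp_mod_coherent[OF b, of N ?M] nonzero by auto
  ultimately have "p ^ Suc n dvd y ?M - y' ?M"
    using p_power_dvd_mult_cancel by blast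
  then have "[y ?M = y' ?M] (mod p ^ n)"
    by (meson cong_iff_dvd_diff dvd_trans le_SucI p_power_dvd_mono order_refl)
  then show "y n = y' n"
    using Zp_mod_coherent[OF y, of n ?M] Zp_mod_coherent[OF y', of n ?M] by (simp add: cong_def)
qed

lemma zp_div_eqI:
  assumes "b \<in> Zp p" "y \<in> Zp p" "b N \<noteq> 0" "zp_mult p b y = a"
  shows "zp_div p a b = y"
  unfolding zp_div_def
proof (rule the_equality)
  fix y' assume y': "y' \<in> Zp p \<and> zp_mult p b y' = a"
  then have "zp_mult p b y' = zp_mult p b y" using assms(4) by simp
  with y' show "y' = y" using zp_mult_left_cancel[OF assms(1) _ assms(2,3)] by simp
qed (use assms in simp)

lemma zp_divide_p_power:
  assumes x: "x \<in> Zp p" and zero: "x h = 0"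
  obtains y where "y \<in> Zp p" "\<And>n. x n = p ^ h * y n mod p ^ n"
proof -
  have factor: "x (n + h) = p ^ h * (x (n + h) div p ^ h)" for n
    using Zp_mod_coherent[OF x, of h "n + h"] zero by (simp add: dvd_eq_mod_eq_0)
  define y where "y n = x (n + h) div p ^ h mod p ^ n" for n
  have "y \<in> Zp p"
  proof (rule Zp_memI)
    fix n
    let ?q = "x (n + h) div p ^ h" and ?q' = "x (Suc n + h) div p ^ h"
    have "p ^ h * ?q = x (Suc n + h) mod p ^ (n + h)"
      using factor[of n] Zp_mod_coherent[OF x, of "n + h" "Suc n + h"] by simp
    also have "\<dots> = p ^ h * ?q' mod (p ^ h * p ^ n)"
      using factor[of "Suc n"] by (simp add: power_add mult.commute)
    also have "\<dots> = p ^ h * (?q' mod p ^ n)"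
      by (rule mod_mult_mult1)
    finally have "?q = ?q' mod p ^ n" by simp
    then show "[y (Suc n) = y n] (mod p ^ n)"
      unfolding y_def cong_def by (simp add: mod_mod_cancel p_power_dvd_mono)
  qed (simp add: y_def)
  moreover have "x n = p ^ h * y n mod p ^ n" for n
  proof -
    have "p ^ h * y n mod p ^ n = x (n + h) mod p ^ n"
      using factor[of n] by (simp add: y_def mod_simps)
    then show ?thesis using Zp_mod_coherent[OF x, of n "n + h"] by simp
  qed
  ultimately show ?thesis using that by blast
qed

lemma zp_div_by_scaled_unit:
  assumes s: "s \<in> Zp p" "\<not> p dvd s 1" and c: "c = p ^ e * q" "\<not> p dvd q"
    and a: "a \<in> Zp p" and y: "y \<in> Zp p" and ay: "\<And>n. [a n = p ^ e * y n] (mod p ^ n)"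
  obtains t where "t \<in> Zp p" "\<And>n. [q * s n * t n = 1] (mod p ^ n)"
    "zp_div p a (zp_mult p (zp_of_int p c) s) = zp_mult p y t"
proof -
  let ?qs = "zp_mult p (zp_of_int p q) s"
  have "\<not> p dvd ?qs 1"
    using c(2) s(2) prime_p by (simp add: zp_apply mod_simps dvd_mod_iff prime_dvd_mult_iff)
  then obtain t where t: "t \<in> Zp p" and inverse: "\<And>n. [?qs n * t n = 1] (mod p ^ n)"
    using zp_unit_inverse s by (metis zp_mult_mem zp_of_int_mem)
  have inverse': "[q * s n * t n = 1] (mod p ^ n)" for n
    using inverse[of n] by (simp add: zp_apply cong_def mod_simps)
  let ?b = "zp_mult p (zp_of_int p c) s"
  have "?b (Suc e) \<noteq> 0"
  proof
    assume "?b (Suc e) = 0"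
    then have "p * p ^ e dvd p ^ e * (q * s (Suc e))"
      using c(1) by (simp add: zp_apply mod_simps dvd_eq_mod_eq_0 mult.assoc)
    then have "p dvd q * s (Suc e)" by simp
    then show False
      using c(2) Zp_unit_level[OF s, of "Suc e"] prime_p by (simp add: prime_dvd_mult_iff)
  qed
  moreover have "zp_mult p ?b (zp_mult p y t) = a"
  proof (rule Zp_eqI)
    fix n
    have "[zp_mult p ?b (zp_mult p y t) n = c * s n * (y n * t n)] (mod p ^ n)"
      by (simp add: zp_apply cong_def mod_simps)
    also have "c * s n * (y n * t n) = p ^ e * y n * (q * s n * t n)"
      using c(1) by (simp add: algebra_simps)
    also have "[\<dots> = p ^ e * y n * 1] (mod p ^ n)"
      using inverse'[of n] by (rule cong_scalar_left)
    also have "[p ^ e * y n * 1 = a n] (mod p ^ n)"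
      using ay[of n] by (simp add: cong_sym)
    finally show "[zp_mult p ?b (zp_mult p y t) n = a n] (mod p ^ n)" .
  qed (use s y t a in simp_all)
  ultimately have "zp_div p a ?b = zp_mult p y t"
    using s y t by (intro zp_div_eqI) simp_all
  with t inverse' that show ?thesis by blast
qed

lemma zp_sums_truncated:
  fixes B :: "nat \<Rightarrow> nat"
  assumes "\<And>n k. B n \<le> k \<Longrightarrow> f k n mod p ^ n = 0"
  shows "zp_sums p f (\<lambda>n. (\<Sum>k<B n. f k n) mod p ^ n)"
  unfolding zp_sums_def zp_lim_def zp_sum_def
  using sum_mod_eq_truncated[of "B _" "\<lambda>k. f k _"] assms by blast

lemma zp_sums_truncated_mem:
  fixes B :: "nat \<Rightarrow> nat"
  assumes tail: "\<And>n k. B n \<le> k \<Longrightarrow> f k n mod p ^ n = 0" and f: "\<And>k. f k \<in> Zp p"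
  shows "(\<lambda>n. (\<Sum>k<B n. f k n) mod p ^ n) \<in> Zp p"
proof (rule Zp_reduce_memI)
  fix n
  let ?K = "max (B n) (B (Suc n))"
  have "[(\<Sum>k<?K. f k (Suc n)) = (\<Sum>k<B (Suc n). f k (Suc n))] (mod p ^ Suc n)"
    unfolding cong_def by (rule sum_mod_eq_truncated) (blast intro: tail, simp)
  then have "[(\<Sum>k<B (Suc n). f k (Suc n)) = (\<Sum>k<?K. f k (Suc n))] (mod p ^ Suc n)"
    by (rule cong_sym)
  then have "[(\<Sum>k<B (Suc n). f k (Suc n)) = (\<Sum>k<?K. f k (Suc n))] (mod p ^ n)"
    by (rule cong_dvd_modulus) (simp add: p_power_dvd_mono)
  also have "[(\<Sum>k<?K. f k (Suc n)) = (\<Sum>k<?K. f k n)] (mod p ^ n)"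
    by (rule cong_sum) (use f Zp_cong_Suc in blast)
  also have "[(\<Sum>k<?K. f k n) = (\<Sum>k<B n. f k n)] (mod p ^ n)"
    unfolding cong_def by (rule sum_mod_eq_truncated) (blast intro: tail, simp)
  finally show "[(\<Sum>k<B (Suc n). f k (Suc n)) = (\<Sum>k<B n. f k n)] (mod p ^ n)" .
qed

lemma prime_nat_p: "prime (nat p)"
  using prime_p by (simp add: prime_nat_iff_prime)

lemma euler_p_power:
  assumes "\<not> p dvd a" and "1 \<le> n"
  shows "[a ^ (nat (p - 1) * nat p ^ (n - 1)) = 1] (mod p ^ n)"
proof -
  have "residues (p ^ n)"
    unfolding residues_def using assms(2) by (simp add: one_less_power)
  then have "[a ^ totient (nat (p ^ n)) = 1] (mod p ^ n)"
    using coprime_p_power[OF assms(1)] by (rule residues.euler_theorem)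
  moreover have "totient (nat (p ^ n)) = nat (p - 1) * nat p ^ (n - 1)"
  proof -
    have "nat (p ^ n) = nat p ^ n"
      using p_pos by (intro nat_power_eq) linarith
    moreover have "nat (p - 1) = nat p - 1"
      using p_gt_1 by (simp add: nat_diff_distrib)
    ultimately show ?thesis
      using totient_prime_power[OF prime_nat_p, of n] assms(2) by (simp add: mult.commute)
  qed
  ultimately show ?thesis by simp
qed

lemma fermat_p: "[a ^ nat p = a] (mod p)"
proof (cases "p dvd a")
  case True
  moreover have "a dvd a ^ nat p"
    using p_gt_1 by (intro dvd_power) auto
  ultimately have "p dvd a ^ nat p" by (rule dvd_trans)
  with True show ?thesis by (simp add: cong_def dvd_eq_mod_eq_0)
next
  case False
  then have "[a ^ nat (p - 1) * a = 1 * a] (mod p)"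
    using euler_p_power[of a 1] by (intro cong_scalar_right) simp
  moreover have "a ^ nat (p - 1) * a = a ^ nat p"
  proof -
    have "nat p = Suc (nat (p - 1))" using p_gt_1 by linarith
    then show ?thesis by (simp add: mult.commute)
  qed
  ultimately show ?thesis by simp
qed

lemma fermat_p_power: "[a ^ (nat p ^ k) = a] (mod p)"
proof (induction k)
  case (Suc k)
  have "[(a ^ (nat p ^ k)) ^ nat p = a ^ nat p] (mod p)"
    using Suc.IH by (rule cong_pow)
  then show ?case
    using fermat_p by (simp add: power_mult[symmetric] mult.commute cong_trans)
qed simp

lemma root_of_unity_lift_unique:
  assumes a: "[a ^ nat (p - 1) = 1] (mod p ^ n)" and b: "[b ^ nat (p - 1) = 1] (mod p ^ n)"
    and ab: "[a = b] (mod p)"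
  shows "[a = b] (mod p ^ n)"
proof (cases "n = 0")
  case False
  define d where "d = nat (p - 1)"
  have d: "0 < d" "\<not> p dvd int d"
    using p_gt_1 zdvd_imp_le[of p "p - 1"] unfolding d_def by auto
  have "\<not> p dvd a"
  proof
    assume "p dvd a"
    moreover have "a dvd a ^ d" using d(1) by (intro dvd_power) auto
    ultimately have "p dvd a ^ d" by (rule dvd_trans)
    moreover have "[a ^ d = 1] (mod p)"
      using a False unfolding d_def by (simp add: cong_dvd_modulus dvd_power)
    ultimately show False using p_gt_1 by (simp add: cong_dvd_iff)
  qed
  define S where "S = (\<Sum>i<d. b ^ (d - Suc i) * a ^ i)"
  have "[a ^ d = b ^ d] (mod p ^ n)" using a b unfolding d_def by (meson cong_sym cong_trans)
  then have dvd: "p ^ n dvd (a - b) * S"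
    unfolding S_def by (simp add: cong_iff_dvd_diff power_diff_sumr2)
  have "[S = (\<Sum>i<d. a ^ (d - 1))] (mod p)"
    unfolding S_def
  proof (rule cong_sum)
    fix i assume "i \<in> {..<d}"
    then have "a ^ (d - Suc i) * a ^ i = a ^ (d - 1)" by (simp flip: power_add)
    moreover have "[b ^ (d - Suc i) * a ^ i = a ^ (d - Suc i) * a ^ i] (mod p)"
      using ab by (intro cong_scalar_right cong_pow) (simp add: cong_sym)
    ultimately show "[b ^ (d - Suc i) * a ^ i = a ^ (d - 1)] (mod p)" by simp
  qed
  moreover have "\<not> p dvd (\<Sum>i<d. a ^ (d - 1))"
    using d(2) \<open>\<not> p dvd a\<close> prime_p by (auto simp: prime_dvd_mult_iff dest: prime_dvd_power)
  ultimately have "\<not> p dvd S" by (simp add: cong_dvd_iff)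
  with dvd have "p ^ n dvd a - b" by (rule p_power_dvd_cancel)
  then show ?thesis by (simp add: cong_iff_dvd_diff)
qed simp

definition teich_power :: "(nat \<Rightarrow> int) \<Rightarrow> nat \<Rightarrow> int" where
  "teich_power x n = x n ^ (nat p ^ (n - 1)) mod p ^ n"

context
  fixes x :: "nat \<Rightarrow> int"
  assumes x: "x \<in> Zp p" and unit: "\<not> p dvd x 1"
begin

lemma teich_power_root_of_unity: "[teich_power x n ^ nat (p - 1) = 1] (mod p ^ n)"
proof (cases "n = 0")
  case False
  have "[teich_power x n ^ nat (p - 1) = x n ^ (nat (p - 1) * nat p ^ (n - 1))] (mod p ^ n)"
    unfolding teich_power_def cong_def by (simp add: mod_simps flip: power_mult) (simp add: mult.commute)
  also have "[x n ^ (nat (p - 1) * nat p ^ (n - 1)) = 1] (mod p ^ n)"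
    using Zp_unit_level[OF x unit, of n] False by (intro euler_p_power) auto
  finally show ?thesis .
qed simp

lemma teich_power_cong_level_1: "1 \<le> n \<Longrightarrow> [teich_power x n = x 1] (mod p)"
proof -
  assume "1 \<le> n"
  then have "[teich_power x n = x n ^ (nat p ^ (n - 1))] (mod p)"
    unfolding teich_power_def cong_def by (simp add: mod_mod_cancel p_power_dvd_mono[of 1 n, simplified])
  also have "[x n ^ (nat p ^ (n - 1)) = x n] (mod p)" by (rule fermat_p_power)
  also have "[x n = x 1] (mod p)" using Zp_cong_level_1[OF x \<open>1 \<le> n\<close>] .
  finally show ?thesis .
qed

lemma teich_power_mem: "teich_power x \<in> Zp p"
proof (rule Zp_memI)
  fix n
  show "[teich_power x (Suc n) = teich_power x n] (mod p ^ n)"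
  proof (cases "n = 0")
    case False
    show ?thesis
    proof (rule root_of_unity_lift_unique)
      show "[teich_power x (Suc n) ^ nat (p - 1) = 1] (mod p ^ n)"
        using teich_power_root_of_unity[of "Suc n"] by (rule cong_dvd_modulus) (simp add: p_power_dvd_mono)
      show "[teich_power x (Suc n) = teich_power x n] (mod p)"
        using teich_power_cong_level_1[of "Suc n"] teich_power_cong_level_1[of n] False
        by (simp add: cong_def)
    qed (rule teich_power_root_of_unity)
  qed simp
qed (simp add: teich_power_def)

lemma teich_power_unique:
  assumes w: "w \<in> Zp p" "zp_pow p w (nat (p - 1)) = zp_of_int p 1" "w 1 = x 1"
  shows "w = teich_power x"
proof (rule Zp_eqI[OF w(1) teich_power_mem])
  fix n
  show "[w n = teich_power x n] (mod p ^ n)"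
  proof (cases "n = 0")
    case False
    have "[w n ^ nat (p - 1) = 1] (mod p ^ n)"
      using fun_cong[OF w(2), of n] by (simp add: zp_apply cong_def)
    moreover have "[w n = x 1] (mod p)"
      using Zp_cong_level_1[OF w(1), of n] w(3) False by simp
    moreover have "[x 1 = teich_power x n] (mod p)"
      using teich_power_cong_level_1[of n] False by (simp add: cong_sym_eq)
    ultimately show ?thesis
      using teich_power_root_of_unity[of n] by (meson cong_trans root_of_unity_lift_unique)
  qed simp
qed

lemma teich_eq: "teich p x = teich_power x"
  unfolding teich_def
proof (rule the_equality)
  show "teich_power x \<in> Zp p \<and> zp_pow p (teich_power x) (nat (p - 1)) = zp_of_int p 1
      \<and> teich_power x 1 = x 1"
    using teich_power_mem teich_power_root_of_unity Zp_mod_self[OF x, of 1]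
    by (simp add: zp_apply cong_def fun_eq_iff teich_power_def)
qed (elim conjE, rule teich_power_unique)

lemma teich_mem: "teich p x \<in> Zp p"
  and teich_level_1: "teich p x 1 = x 1"
  and teich_root_of_unity: "[teich p x n ^ nat (p - 1) = 1] (mod p ^ n)"
  using teich_power_mem teich_power_root_of_unity Zp_mod_self[OF x, of 1]
  by (simp_all add: teich_eq teich_power_def)

end

lemma multiplicity_fact_Suc:
  "multiplicity p (fact (Suc m) :: int) = multiplicity p (int (Suc m)) + multiplicity p (fact m :: int)"
proof -
  have "fact (Suc m) = int (Suc m) * (fact m :: int)" by (simp del: of_nat_Suc)
  then show ?thesis
    using prime_elem_multiplicity_mult_distrib[of p "int (Suc m)" "fact m"] prime_p p_pos
    by (simp add: abs_of_pos del: of_nat_Suc)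
qed

lemma multiplicity_fact_recursion:
  "b < nat p \<Longrightarrow> multiplicity p (fact (nat p * a + b) :: int) = a + multiplicity p (fact a :: int)"
proof (induction a arbitrary: b)
  case 0
  have "\<not> p dvd fact b"
  proof
    assume "p dvd fact b"
    then have "nat p dvd fact b"
      using p_pos by (metis int_dvd_int_iff nat_0_le of_nat_fact less_imp_le)
    then show False using 0 prime_nat_p by (simp add: prime_dvd_fact_iff)
  qed
  then show ?case by (simp add: not_dvd_imp_multiplicity_0)
next
  case (Suc a)
  show ?case using Suc.prems
  proof (induction b)
    case 0
    define m where "m = nat p * a + (nat p - 1)"
    have suc: "Suc m = nat p * Suc a" using p_gt_1 unfolding m_def by simp
    have "int (Suc m) = p * int (Suc a)"
      unfolding suc using p_pos by (simp add: algebra_simps less_imp_le)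
    then have "multiplicity p (int (Suc m)) = Suc (multiplicity p (int (Suc a)))"
      using multiplicity_times_same[of "int (Suc a)" p] by (simp del: of_nat_Suc)
    moreover have "multiplicity p (fact m :: int) = a + multiplicity p (fact a :: int)"
      unfolding m_def by (rule Suc.IH) (use p_gt_1 in simp)
    ultimately show ?case
      using multiplicity_fact_Suc[of m] multiplicity_fact_Suc[of a] by (simp add: suc del: of_nat_Suc)
  next
    case (Suc b)
    have "\<not> p dvd int (Suc (nat p * Suc a + b))"
    proof
      assume "p dvd int (Suc (nat p * Suc a + b))"
      then have "p dvd p * int (Suc a) + int (Suc b)"
        using p_pos by (simp add: algebra_simps less_imp_le)
      then have "p dvd int (Suc b)" by (simp add: dvd_add_right_iff)
      then show False using Suc.prems zdvd_imp_le[of p "int (Suc b)"] by linarith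
    qed
    then show ?case
      using Suc multiplicity_fact_Suc[of "nat p * Suc a + b"] by (simp add: not_dvd_imp_multiplicity_0)
  qed
qed

lemma multiplicity_fact_less:
  "0 < m \<Longrightarrow> (p - 1) * int (multiplicity p (fact m :: int)) < int m"
proof (induction m rule: less_induct)
  case (less m)
  define a where "a = m div nat p"
  have m: "m = nat p * a + m mod nat p" unfolding a_def by simp
  have v: "multiplicity p (fact m :: int) = a + multiplicity p (fact a :: int)"
    using multiplicity_fact_recursion[of "m mod nat p" a] p_gt_1 m by simp
  show ?case
  proof (cases "a = 0")
    case True
    then show ?thesis using v less.prems by simp
  next
    case False
    have "a < m"
      unfolding a_def using p_gt_1 less.prems by (intro div_less_dividend) auto
    then have "(p - 1) * int (multiplicity p (fact a :: int)) < int a"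
      using False less.IH by simp
    moreover have "p * int a \<le> int m"
      using m p_pos by (metis le_add1 nat_0_le of_nat_le_iff of_nat_mult int_nat_eq less_imp_le)
    ultimately show ?thesis using v by (simp add: algebra_simps)
  qed
qed

lemma zp_mult_one_right: "x \<in> Zp p \<Longrightarrow> zp_mult p x (zp_of_int p 1) = x"
  by (simp add: zp_apply fun_eq_iff mod_mult_right_eq)

lemma zp_mult_one_left: "x \<in> Zp p \<Longrightarrow> zp_mult p (zp_of_int p 1) x = x"
  by (simp add: zp_apply fun_eq_iff mod_mult_left_eq)

lemma zp_mult_of_int_apply: "zp_mult p (zp_of_int p c) y n = c * y n mod p ^ n"
  by (simp add: zp_apply mod_simps)

lemma zp_mult_p_power_vanish: "n \<le> j \<Longrightarrow> zp_mult p (zp_of_int p (p ^ j)) y n = 0"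
  by (simp add: zp_mult_of_int_apply le_imp_power_dvd)

lemma zp_mult_p_level_2_nonzero:
  "y \<in> Zp p \<Longrightarrow> \<not> p dvd y 1 \<Longrightarrow> zp_mult p (zp_of_int p p) y 2 \<noteq> 0"
  using Zp_unit_level[of y 2] by (simp add: zp_mult_of_int_apply power2_eq_square mod_eq_0_iff_dvd)

lemma multiplicity_Suc_bound:
  "(p - 1) * int (multiplicity p (int (Suc k))) \<le> int k"
proof -
  have "multiplicity p (int (Suc k)) \<le> multiplicity p (fact (Suc k) :: int)"
    by (intro dvd_imp_multiplicity_le) (simp_all add: dvd_fact del: of_nat_Suc)
  then have "(p - 1) * int (multiplicity p (int (Suc k))) \<le> (p - 1) * int (multiplicity p (fact (Suc k) :: int))"
    using p_gt_1 by (intro mult_left_mono) simp_all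
  also have "\<dots> < int (Suc k)" by (rule multiplicity_fact_less) simp
  finally show ?thesis by simp
qed

lemma zp_div_scaled_power:
  assumes b: "b \<in> Zp p" and w: "w \<in> Zp p" and s: "s \<in> Zp p" "\<not> p dvd s 1"
    and c: "c \<noteq> 0" and e: "multiplicity p c \<le> m"
  obtains y where "y \<in> Zp p"
    "zp_div p (zp_mult p b (zp_pow p (zp_mult p (zp_of_int p p) w) m)) (zp_mult p (zp_of_int p c) s)
       = zp_mult p (zp_of_int p (p ^ (m - multiplicity p c))) y"
    "\<not> p dvd b 1 \<Longrightarrow> \<not> p dvd w 1 \<Longrightarrow> \<not> p dvd y 1"
proof -
  define e where "e = multiplicity p c"
  obtain q where c_eq: "c = p ^ e * q" and q: "\<not> p dvd q"
    unfolding e_def using multiplicity_decompose'[of c p] c by auto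
  let ?a = "zp_mult p b (zp_pow p (zp_mult p (zp_of_int p p) w) m)"
  let ?y = "zp_mult p (zp_of_int p (p ^ (m - e))) (zp_mult p b (zp_pow p w m))"
  have "[?a n = p ^ e * ?y n] (mod p ^ n)" for n
  proof -
    have "p ^ m = p ^ e * p ^ (m - e)" using e unfolding e_def by (simp flip: power_add)
    have "[?a n = b n * (p * w n) ^ m] (mod p ^ n)"
      by (simp add: zp_apply cong_def mod_simps)
    also have "b n * (p * w n) ^ m = p ^ e * (p ^ (m - e) * (b n * w n ^ m))"
      using \<open>p ^ m = p ^ e * p ^ (m - e)\<close> by (simp add: power_mult_distrib mult_ac)
    also have "[\<dots> = p ^ e * ?y n] (mod p ^ n)"
      by (rule cong_scalar_left) (simp add: zp_apply cong_def mod_simps)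
    finally show ?thesis .
  qed
  then obtain t where t: "t \<in> Zp p" and inverse: "\<And>n. [q * s n * t n = 1] (mod p ^ n)"
    and quotient: "zp_div p ?a (zp_mult p (zp_of_int p c) s) = zp_mult p ?y t"
    using zp_div_by_scaled_unit[OF s c_eq q] b w by (metis zp_mult_mem zp_of_int_mem zp_pow_mem)
  let ?y' = "zp_mult p (zp_mult p b (zp_pow p w m)) t"
  have "zp_mult p ?y t = zp_mult p (zp_of_int p (p ^ (m - e))) ?y'"
    by (rule zp_mult_assoc)
  moreover have "\<not> p dvd ?y' 1" if "\<not> p dvd b 1" "\<not> p dvd w 1"
  proof -
    have "\<not> p dvd t 1"
      using inverse[of 1] by (intro not_dvd_of_cong_mult_1[of "q * s 1"]) simp
    then show ?thesis
      using that prime_p prime_dvd_power[OF prime_p, of "w 1" m]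
      by (auto simp: zp_apply mod_simps dvd_mod_iff prime_dvd_mult_iff)
  qed
  ultimately show ?thesis
    using that[of ?y'] quotient b w t unfolding e_def by simp
qed

lemma zp_mult_div_cancel:
  assumes b: "b \<in> Zp p" "\<not> p dvd b 1" and a: "a \<in> Zp p"
  shows "zp_mult p b (zp_div p a b) = a"
proof -
  obtain t where t: "t \<in> Zp p" and inverse: "\<And>n. [b n * t n = 1] (mod p ^ n)"
    using zp_unit_inverse[OF b] by blast
  have "zp_mult p b (zp_mult p a t) = a"
  proof (rule Zp_eqI)
    fix n
    have "[zp_mult p b (zp_mult p a t) n = a n * (b n * t n)] (mod p ^ n)"
      by (simp add: zp_apply cong_def mod_simps mult_ac)
    also have "[a n * (b n * t n) = a n * 1] (mod p ^ n)"
      using inverse[of n] by (rule cong_scalar_left)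
    finally show "[zp_mult p b (zp_mult p a t) n = a n] (mod p ^ n)" by simp
  qed (use a b t in simp_all)
  moreover have "b 1 \<noteq> 0" using b(2) by auto
  ultimately have "zp_div p a b = zp_mult p a t"
    using a t by (intro zp_div_eqI[OF b(1)]) simp_all
  with \<open>zp_mult p b (zp_mult p a t) = a\<close> show ?thesis by simp
qed

lemma zp_quadratic_root_cong:
  assumes "zp_sub p (zp_sub p (zp_pow p x 2) x) (zp_of_int p 1) = zp_of_int p 0"
  shows "[x n ^ 2 - x n - 1 = 0] (mod p ^ n)"
  using fun_cong[OF assms, of n] by (simp add: zp_apply cong_def mod_simps)

lemma golden_root_lift_unique:
  assumes x: "x \<in> Zp p" and y: "y \<in> Zp p"
    and x_root: "zp_sub p (zp_sub p (zp_pow p x 2) x) (zp_of_int p 1) = zp_of_int p 0"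
    and y_root: "zp_sub p (zp_sub p (zp_pow p y 2) y) (zp_of_int p 1) = zp_of_int p 0"
    and same: "x 1 = y 1" and simple: "\<not> p dvd 2 * x 1 - 1"
  shows "x = y"
proof (rule Zp_eqI[OF x y])
  fix n
  show "[x n = y n] (mod p ^ n)"
  proof (cases "n = 0")
    case False
    have "p ^ n dvd (x n ^ 2 - x n - 1) - (y n ^ 2 - y n - 1)"
      using zp_quadratic_root_cong[OF x_root, of n] zp_quadratic_root_cong[OF y_root, of n]
      unfolding cong_0_iff by (rule dvd_diff)
    moreover have "(x n ^ 2 - x n - 1) - (y n ^ 2 - y n - 1) = (x n - y n) * (x n + y n - 1)"
      by (simp add: power2_eq_square algebra_simps)
    moreover have "[x n + y n - 1 = 2 * x 1 - 1] (mod p)"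
    proof -
      have "[x n + y n - 1 = x 1 + x 1 - 1] (mod p)"
        using Zp_cong_level_1[OF x, of n] Zp_cong_level_1[OF y, of n] same False
        by (intro cong_diff cong_add) auto
      then show ?thesis by simp
    qed
    then have "\<not> p dvd x n + y n - 1" using simple by (simp add: cong_dvd_iff)
    ultimately have "p ^ n dvd x n - y n" by (metis p_power_dvd_cancel)
    then show ?thesis by (simp add: cong_iff_dvd_diff)
  qed simp
qed

lemma div_p_mem_range: "0 \<le> y \<Longrightarrow> y < p ^ Suc k \<Longrightarrow> y div p \<in> {0..<p ^ k}"
proof -
  assume y: "0 \<le> y" "y < p ^ Suc k"
  have "p * (y div p) + y mod p = y" by simp
  moreover have "0 \<le> y mod p" by simp
  ultimately have "p * (y div p) < p * p ^ k" using y(2) by (simp only: power_Suc)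
  then have "y div p < p ^ k" using mult_less_cancel_left_pos[OF p_pos] by blast
  then show ?thesis using y(1) by (simp add: pos_imp_zdiv_nonneg_iff)
qed

end

locale zp_power_series = prime_zp +
  fixes a :: "nat \<Rightarrow> nat \<Rightarrow> int"
  assumes coeff_mem: "a m \<in> Zp p"
    and coeff_vanish: "2 * n \<le> m \<Longrightarrow> a m n = 0"
begin

text \<open>Since \<open>a\<^sub>m\<close> vanishes modulo \<open>p\<^sup>n\<close> for \<open>m \<ge> 2n\<close>, \<open>level n (x n)\<close> is the value of
  \<open>\<Sum> a\<^sub>m x\<^sup>m\<close> modulo \<open>p\<^sup>n\<close>.\<close>

definition level :: "nat \<Rightarrow> int \<Rightarrow> int" where
  "level n r = (\<Sum>m<2 * n. a m n * r ^ m) mod p ^ n"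

lemma level_range: "0 \<le> level n r \<and> level n r < p ^ n"
  unfolding level_def by simp

lemma series_sums:
  assumes x: "x \<in> Zp p"
  shows "zp_sums p (\<lambda>m. zp_mult p (a m) (zp_pow p x m)) (\<lambda>n. level n (x n))"
    and "(\<lambda>n. level n (x n)) \<in> Zp p"
proof -
  let ?f = "\<lambda>m. zp_mult p (a m) (zp_pow p x m)"
  have tail: "?f m n mod p ^ n = 0" if "2 * n \<le> m" for n m
    using coeff_vanish[OF that] by (simp add: zp_apply)
  have level: "(\<lambda>n. (\<Sum>m<2 * n. ?f m n) mod p ^ n) = (\<lambda>n. level n (x n))"
    unfolding level_def by (simp add: zp_apply mod_simps)
  show "zp_sums p ?f (\<lambda>n. level n (x n))"
    using zp_sums_truncated[of "\<lambda>n. 2 * n" ?f] tail unfolding level by blast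
  show "(\<lambda>n. level n (x n)) \<in> Zp p"
    using zp_sums_truncated_mem[of "\<lambda>n. 2 * n" ?f] tail coeff_mem x unfolding level by simp
qed

lemma level_mod: "k \<le> n \<Longrightarrow> level n r mod p ^ k = level k r"
proof -
  assume "k \<le> n"
  then have "level n r mod p ^ k = (\<Sum>m<2 * n. a m n * r ^ m mod p ^ k) mod p ^ k"
    unfolding level_def by (simp add: mod_mod_cancel p_power_dvd_mono mod_sum_eq)
  also have "(\<Sum>m<2 * n. a m n * r ^ m mod p ^ k) = (\<Sum>m<2 * n. a m k * r ^ m mod p ^ k)"
    using Zp_mod_coherent[OF coeff_mem \<open>k \<le> n\<close>] by (metis mod_mult_left_eq)
  also have "(\<Sum>m<2 * n. a m k * r ^ m mod p ^ k) mod p ^ k = (\<Sum>m<2 * n. a m k * r ^ m) mod p ^ k"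
    by (simp add: mod_sum_eq)
  also have "\<dots> = level k r"
    unfolding level_def using \<open>k \<le> n\<close> coeff_vanish by (intro sum_mod_eq_truncated) auto
  finally show ?thesis .
qed

text \<open>By coherence these level-2 conditions say that \<open>a\<^sub>1\<close> has valuation exactly 1 and
  \<open>a\<^sub>m\<close> valuation at least 2 for \<open>m \<ge> 2\<close>.\<close>

context
  assumes slope_level_1: "a 1 1 = 0" and slope_level_2: "a 1 2 \<noteq> 0"
    and higher_level_2: "\<And>m. 2 \<le> m \<Longrightarrow> a m 2 = 0"
begin

lemma level_1: "level 1 r = a 0 1"
  using slope_level_1 Zp_mod_self[OF coeff_mem, of 0 1]
  by (simp add: level_def numeral_2_eq_2)

lemma higher_coeff_dvd: "2 \<le> m \<Longrightarrow> 2 \<le> n \<Longrightarrow> p ^ 2 dvd a m n"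
  using Zp_mod_coherent[OF coeff_mem, of 2 n m] higher_level_2 by (simp add: dvd_eq_mod_eq_0)

lemma slope_coeff: "2 \<le> n \<Longrightarrow> \<exists>c. a 1 n = p * c \<and> \<not> p dvd c"
proof -
  assume "2 \<le> n"
  have "a 1 2 mod p = 0"
    using Zp_mod_coherent[OF coeff_mem, of 1 2 1] slope_level_1 by simp
  then obtain c where c: "a 1 2 = p * c" by (auto simp: dvd_eq_mod_eq_0[symmetric])
  have "\<not> p dvd c"
  proof
    assume "p dvd c"
    then have "p ^ 2 dvd a 1 2" using c by (simp add: power2_eq_square)
    then show False
      using slope_level_2 Zp_range[OF coeff_mem, of 1 2] by (auto dest: zdvd_imp_le simp: dvd_eq_mod_eq_0[symmetric] mod_pos_pos_trivial)
  qed
  moreover have "p ^ 2 dvd a 1 n - a 1 2"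
    using Zp_cong_coherent[OF coeff_mem \<open>2 \<le> n\<close>] by (simp add: cong_iff_dvd_diff)
  then obtain t where "a 1 n = p * (c + p * t)"
    using c by (auto simp: power2_eq_square algebra_simps elim!: dvdE)
  moreover from \<open>\<not> p dvd c\<close> have "\<not> p dvd c + p * t"
    by (simp add: dvd_add_left_iff)
  ultimately show ?thesis by blast
qed

text \<open>Writing \<open>r\<^sup>m - s\<^sup>m = (r - s) S\<^sub>m\<close>, the factor of \<open>r - s\<close> is \<open>a\<^sub>1\<close> plus a multiple of
  \<open>p\<^sup>2\<close>, hence \<open>p\<close> times a unit.\<close>

lemma level_Suc_eq_iff:
  "p ^ Suc k dvd level (Suc k) r - level (Suc k) s \<longleftrightarrow> p ^ k dvd r - s"
proof (cases "k = 0")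
  case True
  then show ?thesis using level_1 by simp
next
  case False
  let ?n = "Suc k"
  define N where "N = 2 * ?n"
  define S where "S m = (\<Sum>j<m. s ^ (m - Suc j) * r ^ j)" for m
  define W where "W = (\<Sum>m<N. a m ?n * S m)"
  obtain c where c: "a 1 ?n = p * c" "\<not> p dvd c"
    using slope_coeff[of ?n] False by auto
  have "p ^ 2 dvd (\<Sum>m\<in>{2..<N}. a m ?n * S m)"
    using False by (intro dvd_sum dvd_mult2 higher_coeff_dvd) auto
  then obtain K where K: "(\<Sum>m\<in>{2..<N}. a m ?n * S m) = p ^ 2 * K"
    by (elim dvdE)
  have "W = a 0 ?n * S 0 + a 1 ?n * S 1 + (\<Sum>m\<in>{2..<N}. a m ?n * S m)"
    unfolding W_def by (rule sum_lessThan_split_01) (simp add: N_def)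
  also have "\<dots> = p * (c + p * K)"
    using c K by (simp add: S_def power2_eq_square algebra_simps)
  finally have W: "W = p * (c + p * K)" .
  have "(\<Sum>m<N. a m ?n * r ^ m) - (\<Sum>m<N. a m ?n * s ^ m) = (r - s) * W"
    unfolding W_def S_def by (rule sum_powers_diff_factor)
  then have diff: "(\<Sum>m<N. a m ?n * r ^ m) - (\<Sum>m<N. a m ?n * s ^ m) = p * ((r - s) * (c + p * K))"
    by (simp add: W mult_ac)
  have unit: "\<not> p dvd c + p * K" using c(2) by (simp add: dvd_add_left_iff)
  have "p ^ ?n dvd level ?n r - level ?n s
      \<longleftrightarrow> p ^ ?n dvd (\<Sum>m<N. a m ?n * r ^ m) - (\<Sum>m<N. a m ?n * s ^ m)"
    unfolding level_def N_def[symmetric] by (simp add: mod_eq_dvd_iff[symmetric])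
  also have "\<dots> \<longleftrightarrow> p * p ^ k dvd p * ((r - s) * (c + p * K))"
    by (simp only: diff power_Suc)
  also have "\<dots> \<longleftrightarrow> p ^ k dvd r - s"
    using p_power_dvd_cancel[of k "r - s" "c + p * K"] unit by auto
  finally show ?thesis .
qed

lemma level_Suc_surj:
  assumes z: "z \<in> Zp p" and z_1: "z 1 = a 0 1"
  shows "\<exists>r \<in> {0..<p ^ k}. level (Suc k) r = z (Suc k)"
proof -
  let ?R = "{0..<p ^ k}" and ?g = "\<lambda>r. level (Suc k) r div p"
  have level: "level (Suc k) r = p * ?g r + a 0 1" for r
    using level_mod[of 1 "Suc k" r] level_1 by (metis div_mult_mod_eq mult.commute power_one_right le_add1 plus_1_eq_Suc)
  have "?g ` ?R \<subseteq> ?R"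
    using level_range[of "Suc k"] div_p_mem_range by blast
  moreover have "inj_on ?g ?R"
  proof
    fix r s assume "r \<in> ?R" "s \<in> ?R" "?g r = ?g s"
    moreover from \<open>?g r = ?g s\<close> have "p ^ k dvd r - s"
      using level[of r] level[of s] level_Suc_eq_iff[of k r s] by simp
    ultimately show "r = s" by (auto intro: eq_of_dvd_diff_bounded)
  qed
  ultimately have "?g ` ?R = ?R"
    by (intro endo_inj_surj) auto
  moreover have "z (Suc k) div p \<in> ?R"
    using Zp_range[OF z, of "Suc k"] div_p_mem_range by blast
  ultimately obtain r where r: "r \<in> ?R" "z (Suc k) div p = ?g r" by blast
  have "z (Suc k) mod p = a 0 1"
    using Zp_mod_coherent[OF z, of 1 "Suc k"] z_1 by simp
  then have "z (Suc k) = p * ?g r + a 0 1"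
    using r(2) by (metis div_mult_mod_eq mult.commute)
  with r(1) level show ?thesis by auto
qed

lemma series_level_preimage:
  assumes z: "z \<in> Zp p" and z_1: "z 1 = a 0 1"
  obtains x where "x \<in> Zp p" "(\<lambda>n. level n (x n)) = z"
proof -
  define x where "x k = (SOME r. r \<in> {0..<p ^ k} \<and> level (Suc k) r = z (Suc k))" for k
  have x_level: "x k \<in> {0..<p ^ k} \<and> level (Suc k) (x k) = z (Suc k)" for k
  proof -
    have "\<exists>r. r \<in> {0..<p ^ k} \<and> level (Suc k) r = z (Suc k)"
      using level_Suc_surj[OF z z_1, of k] by (simp only: Bex_def)
    then show ?thesis unfolding x_def by (rule someI_ex)
  qed
  have x: "x \<in> Zp p"
  proof (rule Zp_memI)
    fix k
    have "level (Suc k) (x (Suc k)) = level (Suc (Suc k)) (x (Suc k)) mod p ^ Suc k"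
      by (rule level_mod[symmetric]) simp
    also have "\<dots> = z (Suc k)"
      using x_level[of "Suc k"] Zp_mod_coherent[OF z, of "Suc k" "Suc (Suc k)"] by simp
    also have "\<dots> = level (Suc k) (x k)"
      using x_level[of k] by simp
    finally show "[x (Suc k) = x k] (mod p ^ k)"
      using level_Suc_eq_iff[of k "x (Suc k)" "x k"] by (simp add: cong_iff_dvd_diff)
  qed (use x_level in simp)
  have "level n (x n) = z n" for n
  proof (cases n)
    case 0
    have "level 0 (x 0) = 0" "z 0 = 0"
      using level_range[of 0 "x 0"] Zp_range[OF z, of 0] by simp_all
    then show ?thesis using 0 by simp
  next
    case (Suc k)
    have "p ^ Suc k dvd level (Suc k) (x (Suc k)) - level (Suc k) (x k)"
      using Zp_cong_Suc[OF x, of k] level_Suc_eq_iff by (simp add: cong_iff_dvd_diff)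
    then have "level (Suc k) (x (Suc k)) = level (Suc k) (x k)"
      using level_range by (blast intro: eq_of_dvd_diff_bounded)
    then show ?thesis using x_level[of k] Suc by simp
  qed
  with x show ?thesis using that by (simp add: fun_eq_iff)
qed

lemma series_range:
  "{z. \<exists>x\<in>Zp p. zp_sums p (\<lambda>m. zp_mult p (a m) (zp_pow p x m)) z} = {z \<in> Zp p. z 1 = a 0 1}"
proof (intro equalityI subsetI)
  fix z assume "z \<in> {z. \<exists>x\<in>Zp p. zp_sums p (\<lambda>m. zp_mult p (a m) (zp_pow p x m)) z}"
  then obtain x where x: "x \<in> Zp p" and sums: "zp_sums p (\<lambda>m. zp_mult p (a m) (zp_pow p x m)) z"
    by blast
  have "z = (\<lambda>n. level n (x n))"
    using sums series_sums(1)[OF x] by (rule zp_sums_unique)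
  then show "z \<in> {z \<in> Zp p. z 1 = a 0 1}"
    using series_sums(2)[OF x] level_1 by simp
next
  fix z assume "z \<in> {z \<in> Zp p. z 1 = a 0 1}"
  then obtain x where "x \<in> Zp p" "(\<lambda>n. level n (x n)) = z"
    using series_level_preimage by blast
  then show "z \<in> {z. \<exists>x\<in>Zp p. zp_sums p (\<lambda>m. zp_mult p (a m) (zp_pow p x m)) z}"
    using series_sums(1) by blast
qed

end

end

locale odd_prime_zp = prime_zp +
  assumes p_odd: "p \<noteq> 2"
begin

lemma log_term_valuation: "2 * multiplicity p (int (Suc k)) \<le> k"
proof -
  have "3 \<le> p" using p_gt_1 p_odd by linarith
  then have "2 * int (multiplicity p (int (Suc k))) \<le> (p - 1) * int (multiplicity p (int (Suc k)))"
    by (intro mult_right_mono) simp_all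
  then show ?thesis using multiplicity_Suc_bound[of k] by linarith
qed

definition log_term :: "(nat \<Rightarrow> int) \<Rightarrow> nat \<Rightarrow> nat \<Rightarrow> int" where
  "log_term u k = zp_div p (zp_mult p (zp_of_int p ((-1) ^ k)) (zp_pow p (zp_sub p u (zp_of_int p 1)) (Suc k)))
     (zp_of_int p (int (Suc k)))"

lemma log_argument_decompose:
  assumes u: "u \<in> Zp p" and u_1: "u 1 = 1" and u_2: "u 2 \<noteq> 1"
  obtains w where "w \<in> Zp p" "\<not> p dvd w 1" "zp_sub p u (zp_of_int p 1) = zp_mult p (zp_of_int p p) w"
proof -
  let ?d = "zp_sub p u (zp_of_int p 1)"
  have "?d \<in> Zp p" "?d 1 = 0"
    using u u_1 by (simp, simp add: zp_apply)
  then obtain w where w: "w \<in> Zp p" and dw: "\<And>n. ?d n = p ^ 1 * w n mod p ^ n"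
    using zp_divide_p_power by blast
  have "\<not> p dvd w 1"
  proof
    assume "p dvd w 1"
    then have "p dvd w 2" using Zp_cong_level_1[OF w, of 2] by (simp add: cong_dvd_iff)
    then have "?d 2 = 0" using dw[of 2] by (auto simp: power2_eq_square)
    then have "p ^ 2 dvd u 2 - 1" by (simp add: zp_apply mod_eq_0_iff_dvd)
    then show False
      using u_2 Zp_range[OF u, of 2] eq_of_dvd_diff_bounded[of "u 2" "p ^ 2" 1] by simp
  qed
  moreover have "?d = zp_mult p (zp_of_int p p) w"
    using dw by (simp add: zp_mult_of_int_apply fun_eq_iff)
  ultimately show ?thesis using that w by blast
qed

context
  fixes u w :: "nat \<Rightarrow> int"
  assumes w: "w \<in> Zp p" and u_minus_1: "zp_sub p u (zp_of_int p 1) = zp_mult p (zp_of_int p p) w"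
begin

lemma log_term_shape:
  obtains y where "y \<in> Zp p"
    "log_term u k = zp_mult p (zp_of_int p (p ^ (Suc k - multiplicity p (int (Suc k))))) y"
    "k = 0 \<Longrightarrow> \<not> p dvd w 1 \<Longrightarrow> \<not> p dvd y 1"
proof -
  have "log_term u k = zp_div p (zp_mult p (zp_of_int p ((-1) ^ k)) (zp_pow p (zp_mult p (zp_of_int p p) w) (Suc k)))
      (zp_mult p (zp_of_int p (int (Suc k))) (zp_of_int p 1))"
    unfolding log_term_def u_minus_1 by (simp add: zp_mult_one_right)
  moreover have one_unit: "\<not> p dvd zp_of_int p 1 1"
    by (simp add: zp_of_int_def)
  moreover have "int (Suc k) \<noteq> 0" by simp
  moreover have "multiplicity p (int (Suc k)) \<le> Suc k"
    using log_term_valuation[of k] by simp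
  ultimately show ?thesis
    using zp_div_scaled_power[OF zp_of_int_mem[of "(-1) ^ k"] w zp_of_int_mem one_unit] that
    by (metis power_0)
qed

lemma log_term_mem: "log_term u k \<in> Zp p"
  by (rule log_term_shape[of k]) simp

lemma log_term_vanish: "n \<le> Suc k - multiplicity p (int (Suc k)) \<Longrightarrow> log_term u k n = 0"
  by (rule log_term_shape[of k]) (simp add: zp_mult_p_power_vanish)

lemma log_term_tail: "2 * n \<le> k \<Longrightarrow> log_term u k n mod p ^ n = 0"
  using log_term_valuation[of k] log_term_vanish[of n k] by simp

lemma zp_log_eq: "zp_log p u = (\<lambda>n. (\<Sum>k<2 * n. log_term u k n) mod p ^ n)"
proof -
  have "zp_sums p (log_term u) (\<lambda>n. (\<Sum>k<2 * n. log_term u k n) mod p ^ n)"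
    using log_term_tail by (rule zp_sums_truncated)
  then show ?thesis
    unfolding zp_log_def log_term_def[symmetric] using zp_sums_unique by blast
qed

lemma zp_log_mem: "zp_log p u \<in> Zp p"
  unfolding zp_log_eq using log_term_tail log_term_mem by (rule zp_sums_truncated_mem)

end

text \<open>Only the \<open>k = 0\<close> term \<open>u - 1\<close> of the logarithm series survives modulo \<open>p\<^sup>2\<close>.\<close>

lemma zp_log_p_times_unit:
  assumes u: "u \<in> Zp p" and u_1: "u 1 = 1" and u_2: "u 2 \<noteq> 1"
  obtains l where "l \<in> Zp p" "\<not> p dvd l 1" "zp_log p u = zp_mult p (zp_of_int p p) l"
proof -
  obtain w where w: "w \<in> Zp p" "\<not> p dvd w 1"
    and u_minus_1: "zp_sub p u (zp_of_int p 1) = zp_mult p (zp_of_int p p) w"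
    using log_argument_decompose[OF u u_1 u_2] by blast
  have level_1: "log_term u k 1 = 0" for k
    using log_term_valuation[of k] by (intro log_term_vanish[OF w(1) u_minus_1]) linarith
  have level_2: "log_term u k 2 = 0" if "1 \<le> k" for k
    using log_term_valuation[of k] that by (intro log_term_vanish[OF w(1) u_minus_1]) presburger
  have "zp_log p u 1 = 0"
    using level_1[of 0] level_1[of 1] by (simp add: zp_log_eq[OF w(1) u_minus_1] numeral_2_eq_2)
  then obtain l where l: "l \<in> Zp p" and log: "\<And>n. zp_log p u n = p ^ 1 * l n mod p ^ n"
    using zp_divide_p_power zp_log_mem[OF w(1) u_minus_1] by blast
  obtain y where y: "y \<in> Zp p" "\<not> p dvd y 1" and term_0: "log_term u 0 = zp_mult p (zp_of_int p p) y"
    using log_term_shape[OF w(1) u_minus_1, of 0] w(2) by auto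
  have "zp_log p u 2 = log_term u 0 2 mod p ^ 2"
    using level_2[of 1] level_2[of 2] level_2[of 3]
    by (simp add: zp_log_eq[OF w(1) u_minus_1] numeral_eq_Suc)
  then have "[p * l 2 = p * y 2] (mod p * p)"
    using log[of 2] term_0 by (simp add: zp_mult_of_int_apply cong_def power2_eq_square)
  then have "[l 2 = y 2] (mod p)"
    by (simp add: cong_iff_dvd_diff right_diff_distrib[symmetric])
  then have "[l 1 = y 1] (mod p)"
    using Zp_cong_level_1[OF l, of 2] Zp_cong_level_1[OF y(1), of 2] by (metis cong_sym cong_trans one_le_numeral)
  then have "\<not> p dvd l 1" using y(2) by (simp add: cong_dvd_iff)
  moreover have "zp_log p u = zp_mult p (zp_of_int p p) l"
    using log by (simp add: zp_mult_of_int_apply fun_eq_iff)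
  ultimately show ?thesis using that l by blast
qed

end

lemma prime_11: "prime (11 :: int)"
proof -
  have "\<not> d dvd 11" if "d \<in> {2..5}" for d :: int
  proof -
    from that have "d \<in> {2, 3, 4, 5}" by auto
    then show ?thesis by auto
  qed
  then show ?thesis by (simp add: check_prime_by_range_class.prime_iff)
qed

lemma int_less_11_cases: "0 \<le> (x :: int) \<Longrightarrow> x < 11 \<Longrightarrow> x \<in> {0, 1, 2, 3, 4, 5, 6, 7, 8, 9, 10}"
  unfolding insert_iff empty_iff by presburger

lemma golden_roots_mod_11:
  "0 \<le> (x :: int) \<Longrightarrow> x < 11 \<Longrightarrow> [x ^ 2 - x - 1 = 0] (mod 11) \<Longrightarrow> x = 4 \<or> x = 8"
  by (drule (1) int_less_11_cases) (auto simp: cong_def)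

lemma golden_roots_mod_121:
  assumes "0 \<le> (x :: int)" "x < 121" "[x ^ 2 - x - 1 = 0] (mod 121)"
  shows "x = 37 \<or> x = 85"
proof -
  have "[x ^ 2 - x - 1 = 0] (mod 11)"
    using assms(3) by (rule cong_dvd_modulus) simp
  moreover have "[(x mod 11) ^ 2 - x mod 11 - 1 = x ^ 2 - x - 1] (mod 11)"
    by (intro cong_diff cong_pow) (simp_all add: cong_def)
  ultimately have "[(x mod 11) ^ 2 - x mod 11 - 1 = 0] (mod 11)"
    using cong_trans by blast
  then have "x mod 11 = 4 \<or> x mod 11 = 8"
    by (intro golden_roots_mod_11) simp_all
  then have "x = 11 * (x div 11) + 4 \<or> x = 11 * (x div 11) + 8"
    using mult_div_mod_eq[of 11 x] by linarith
  moreover have "x div 11 \<in> {0, 1, 2, 3, 4, 5, 6, 7, 8, 9, 10}"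
    using assms(1,2) by (intro int_less_11_cases) auto
  ultimately show ?thesis
    using assms(3) by (elim disjE insertE) (simp_all add: cong_def)
qed

lemma binet_fib_mod_11:
  "i \<le> 9 \<Longrightarrow> [(2 * 4 - 1) * int (fib i) = 4 ^ i - 8 ^ i] (mod 11)
    \<and> [(2 * 8 - 1) * int (fib i) = 8 ^ i - 4 ^ i] (mod 11)"
  by (auto simp: le_Suc_eq numeral_eq_Suc cong_def)

lemma lucas_mod_11_nonzero: "i \<le> 9 \<Longrightarrow> i \<noteq> 5 \<Longrightarrow> \<not> (11 :: int) dvd 4 ^ i + 8 ^ i"
  by (auto simp: le_Suc_eq numeral_eq_Suc)

text \<open>The value of \<open>\<phi> \<omega>(\<phi>)\<^sup>9 = \<phi> / \<omega>(\<phi>)\<close> modulo 121 for both possible values of \<open>\<phi>\<close>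
  modulo 121, using \<open>\<omega>(\<phi>) \<equiv> \<phi>\<^sup>1\<^sup>1\<close>.\<close>

lemma unit_part_mod_121_ne_1:
  "(37 * ((37 ^ 11 mod 121) ^ 9 mod 121)) mod 121 \<noteq> (1 :: int)"
  "(85 * ((85 ^ 11 mod 121) ^ 9 mod 121)) mod 121 \<noteq> (1 :: int)"
  by simp_all

locale golden_roots_11 =
  fixes \<phi> \<phi>' :: "nat \<Rightarrow> int"
  assumes phi_mem: "\<phi> \<in> Zp 11" and phi'_mem: "\<phi>' \<in> Zp 11" and roots_distinct: "\<phi> \<noteq> \<phi>'"
    and phi_root: "zp_sub 11 (zp_sub 11 (zp_pow 11 \<phi> 2) \<phi>) (zp_of_int 11 1) = zp_of_int 11 0"
    and phi'_root: "zp_sub 11 (zp_sub 11 (zp_pow 11 \<phi>' 2) \<phi>') (zp_of_int 11 1) = zp_of_int 11 0"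
begin

sublocale odd_prime_zp 11
  by unfold_locales (simp_all add: prime_11)

lemma golden_root_level_1:
  "x \<in> Zp 11 \<Longrightarrow> zp_sub 11 (zp_sub 11 (zp_pow 11 x 2) x) (zp_of_int 11 1) = zp_of_int 11 0
    \<Longrightarrow> x 1 = 4 \<or> x 1 = 8"
  using golden_roots_mod_11[of "x 1"] Zp_range[of x 1] zp_quadratic_root_cong[of x 1] by simp

lemma roots_level_1: "\<phi> 1 = 4 \<and> \<phi>' 1 = 8 \<or> \<phi> 1 = 8 \<and> \<phi>' 1 = 4"
proof -
  have "\<phi> 1 \<noteq> \<phi>' 1"
  proof
    assume "\<phi> 1 = \<phi>' 1"
    moreover have "\<not> 11 dvd 2 * \<phi> 1 - 1"
      using golden_root_level_1[OF phi_mem phi_root] by auto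
    ultimately have "\<phi> = \<phi>'"
      using golden_root_lift_unique[OF phi_mem phi'_mem phi_root phi'_root] by blast
    with roots_distinct show False ..
  qed
  then show ?thesis
    using golden_root_level_1[OF phi_mem phi_root] golden_root_level_1[OF phi'_mem phi'_root] by auto
qed

lemma phi_level_2: "\<phi> 2 = 37 \<or> \<phi> 2 = 85"
  using golden_roots_mod_121[of "\<phi> 2"] Zp_range[OF phi_mem, of 2] zp_quadratic_root_cong[OF phi_root, of 2]
  by simp

lemma phi_unit: "\<not> 11 dvd \<phi> 1" and phi'_unit: "\<not> 11 dvd \<phi>' 1"
  using roots_level_1 by auto

lemma phi_over_teich_eq: "zp_div 11 \<phi> (teich 11 \<phi>) = zp_mult 11 \<phi> (zp_pow 11 (teich 11 \<phi>) 9)"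
proof (rule zp_div_eqI)
  show "teich 11 \<phi> 1 \<noteq> 0"
    using teich_level_1[OF phi_mem phi_unit] phi_unit by auto
  show "zp_mult 11 (teich 11 \<phi>) (zp_mult 11 \<phi> (zp_pow 11 (teich 11 \<phi>) 9)) = \<phi>"
  proof (rule Zp_eqI)
    fix n
    let ?w = "teich 11 \<phi> n"
    have "[zp_mult 11 (teich 11 \<phi>) (zp_mult 11 \<phi> (zp_pow 11 (teich 11 \<phi>) 9)) n = \<phi> n * (?w * ?w ^ 9)] (mod 11 ^ n)"
      by (simp add: zp_apply cong_def mod_simps mult_ac)
    also have "?w * ?w ^ 9 = ?w ^ 10"
      by (simp flip: power_Suc)
    also have "[\<phi> n * ?w ^ 10 = \<phi> n * 1] (mod 11 ^ n)"
      using teich_root_of_unity[OF phi_mem phi_unit, of n] by (intro cong_scalar_left) simp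
    finally show "[zp_mult 11 (teich 11 \<phi>) (zp_mult 11 \<phi> (zp_pow 11 (teich 11 \<phi>) 9)) n = \<phi> n] (mod 11 ^ n)"
      by simp
  qed (use phi_mem teich_mem[OF phi_mem phi_unit] in simp_all)
qed (use phi_mem teich_mem[OF phi_mem phi_unit] in simp_all)

lemma log_phi_over_teich:
  obtains l where "l \<in> Zp 11" "\<not> 11 dvd l 1"
    "zp_log 11 (zp_div 11 \<phi> (teich 11 \<phi>)) = zp_mult 11 (zp_of_int 11 11) l"
proof (rule zp_log_p_times_unit)
  let ?w = "teich 11 \<phi>"
  show "zp_div 11 \<phi> ?w \<in> Zp 11"
    unfolding phi_over_teich_eq using phi_mem teich_mem[OF phi_mem phi_unit] by simp
  show "zp_div 11 \<phi> ?w 1 = 1"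
    unfolding phi_over_teich_eq using teich_level_1[OF phi_mem phi_unit] roots_level_1
    by (auto simp: zp_apply)
  show "zp_div 11 \<phi> ?w 2 \<noteq> 1"
    unfolding phi_over_teich_eq using teich_eq[OF phi_mem phi_unit] phi_level_2 unit_part_mod_121_ne_1
    by (auto simp: zp_apply teich_power_def)
qed

abbreviation sqrt5 :: "nat \<Rightarrow> int" where
  "sqrt5 \<equiv> zp_sub 11 (zp_mult 11 (zp_of_int 11 2) \<phi>) (zp_of_int 11 1)"

abbreviation binet_numerator :: "nat \<Rightarrow> nat \<Rightarrow> nat \<Rightarrow> int" where
  "binet_numerator i m \<equiv> zp_sub 11 (zp_pow 11 (teich 11 \<phi>) i)
     (zp_mult 11 (zp_of_int 11 ((-1) ^ m)) (zp_pow 11 (teich 11 \<phi>') i))"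

definition fib_coeff :: "nat \<Rightarrow> nat \<Rightarrow> nat \<Rightarrow> int" where
  "fib_coeff i m = zp_div 11
     (zp_mult 11 (binet_numerator i m) (zp_pow 11 (zp_log 11 (zp_div 11 \<phi> (teich 11 \<phi>))) m))
     (zp_mult 11 (zp_of_int 11 (int (fact m))) sqrt5)"

lemma fib_term_eq: "fib_term 11 i \<phi> \<phi>' x m = zp_mult 11 (fib_coeff i m) (zp_pow 11 x m)"
  unfolding fib_term_def fib_coeff_def ..

lemma sqrt5_mem: "sqrt5 \<in> Zp 11"
  using phi_mem by simp

lemma sqrt5_level_1: "sqrt5 1 = (2 * \<phi> 1 - 1) mod 11"
  by (simp add: zp_apply mod_simps)

lemma sqrt5_unit: "\<not> 11 dvd sqrt5 1"
  unfolding sqrt5_level_1 using roots_level_1 by auto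

lemma binet_numerator_mem: "binet_numerator i m \<in> Zp 11"
  using teich_mem[OF phi_mem phi_unit] teich_mem[OF phi'_mem phi'_unit] by simp

lemma binet_numerator_level_1: "[binet_numerator i m 1 = \<phi> 1 ^ i - (-1) ^ m * \<phi>' 1 ^ i] (mod 11)"
  using teich_level_1[OF phi_mem phi_unit] teich_level_1[OF phi'_mem phi'_unit]
  by (simp add: zp_apply cong_def mod_simps)

lemma multiplicity_fact_11: "10 * multiplicity 11 (fact m :: int) \<le> m"
  using multiplicity_fact_less[of m] by (cases "m = 0") simp_all

lemma fib_coeff_shape:
  obtains y where "y \<in> Zp 11"
    "fib_coeff i m = zp_mult 11 (zp_of_int 11 (11 ^ (m - multiplicity 11 (fact m :: int)))) y"
    "\<not> 11 dvd binet_numerator i m 1 \<Longrightarrow> \<not> 11 dvd y 1"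
proof -
  obtain l where l: "l \<in> Zp 11" "\<not> 11 dvd l 1"
    and log: "zp_log 11 (zp_div 11 \<phi> (teich 11 \<phi>)) = zp_mult 11 (zp_of_int 11 11) l"
    by (rule log_phi_over_teich)
  have "fact m \<noteq> (0 :: int)" by simp
  moreover have "multiplicity 11 (fact m :: int) \<le> m"
    using multiplicity_fact_11[of m] by simp
  ultimately show ?thesis
    using zp_div_scaled_power[OF binet_numerator_mem l(1) sqrt5_mem sqrt5_unit] that l(2)
    unfolding fib_coeff_def log by (metis of_nat_fact)
qed

lemma fib_coeff_mem: "fib_coeff i m \<in> Zp 11"
  by (rule fib_coeff_shape[of i m]) simp

lemma fib_coeff_vanish: "n \<le> m - multiplicity 11 (fact m :: int) \<Longrightarrow> fib_coeff i m n = 0"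
  by (rule fib_coeff_shape[of i m]) (simp add: zp_mult_p_power_vanish)

lemma fib_coeff_constant: "i \<le> 9 \<Longrightarrow> fib_coeff i 0 1 = int (fib i mod 11)"
proof -
  assume "i \<le> 9"
  have "fib_coeff i 0 = zp_div 11 (binet_numerator i 0) sqrt5"
    unfolding fib_coeff_def
    using teich_mem[OF phi_mem phi_unit] teich_mem[OF phi'_mem phi'_unit] sqrt5_mem
    by (simp add: zp_pow_0 zp_mult_one_right zp_mult_one_left)
  then have "zp_mult 11 sqrt5 (fib_coeff i 0) = binet_numerator i 0"
    by (simp only: zp_mult_div_cancel[OF sqrt5_mem sqrt5_unit binet_numerator_mem])
  then have "[sqrt5 1 * fib_coeff i 0 1 = binet_numerator i 0 1] (mod 11)"
    by (metis zp_apply(4) cong_def power_one_right mod_mod_trivial)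
  also have "[binet_numerator i 0 1 = (2 * \<phi> 1 - 1) * int (fib i)] (mod 11)"
    using binet_numerator_level_1[of i 0] binet_fib_mod_11[OF \<open>i \<le> 9\<close>] roots_level_1
    by (auto simp: cong_sym_eq intro: cong_trans)
  also have "[(2 * \<phi> 1 - 1) * int (fib i) = sqrt5 1 * int (fib i)] (mod 11)"
    unfolding sqrt5_level_1 by (simp add: cong_def mod_simps)
  finally have "11 dvd sqrt5 1 * (fib_coeff i 0 1 - int (fib i))"
    by (simp add: cong_iff_dvd_diff right_diff_distrib)
  then have "[fib_coeff i 0 1 = int (fib i)] (mod 11)"
    using sqrt5_unit prime_11 by (simp add: prime_dvd_mult_iff cong_iff_dvd_diff)
  then show ?thesis
    using Zp_mod_self[OF fib_coeff_mem, of i 0 1] by (simp add: cong_def zmod_int)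
qed

lemma fib_coeff_linear_level_2:
  assumes "i \<le> 9" "i \<noteq> 5"
  shows "fib_coeff i 1 2 \<noteq> 0"
proof -
  have "\<not> 11 dvd binet_numerator i 1 1"
    using binet_numerator_level_1[of i 1] lucas_mod_11_nonzero[OF assms] roots_level_1
    by (auto simp: cong_dvd_iff add.commute)
  moreover obtain y where "y \<in> Zp 11"
    "fib_coeff i 1 = zp_mult 11 (zp_of_int 11 (11 ^ (1 - multiplicity 11 (fact 1 :: int)))) y"
    "\<not> 11 dvd binet_numerator i 1 1 \<Longrightarrow> \<not> 11 dvd y 1"
    using fib_coeff_shape[of i 1] by blast
  ultimately show ?thesis by (simp add: zp_mult_p_level_2_nonzero)
qed

lemma fib_series_image:
  assumes "i \<le> 9" "i \<noteq> 5"
  shows "(\<forall>x\<in>Zp 11. \<exists>z. zp_sums 11 (fib_term 11 i \<phi> \<phi>' x) z)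
    \<and> {z. \<exists>x\<in>Zp 11. zp_sums 11 (fib_term 11 i \<phi> \<phi>' x) z} = {z \<in> Zp 11. z 1 = int (fib i mod 11)}"
proof -
  have vanish: "fib_coeff i m n = 0" if "2 * n \<le> m \<or> 1 \<le> m \<and> n \<le> min 2 m" for m n
  proof (rule fib_coeff_vanish)
    show "n \<le> m - multiplicity 11 (fact m :: int)"
      using multiplicity_fact_11[of m] that by (cases "multiplicity 11 (fact m :: int) = 0") auto
  qed
  interpret zp_power_series 11 "fib_coeff i"
    using fib_coeff_mem vanish by unfold_locales auto
  have "fib_coeff i 1 1 = 0"
    by (rule vanish) simp
  moreover note fib_coeff_linear_level_2[OF assms]
  moreover have "fib_coeff i m 2 = 0" if "2 \<le> m" for m
    using that by (intro vanish) simp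
  ultimately have range: "{z. \<exists>x\<in>Zp 11. zp_sums 11 (\<lambda>m. zp_mult 11 (fib_coeff i m) (zp_pow 11 x m)) z}
      = {z \<in> Zp 11. z 1 = fib_coeff i 0 1}"
    by (rule series_range)
  show ?thesis
    unfolding fib_term_eq range fib_coeff_constant[OF assms(1)] using series_sums(1) by blast
qed

end

theorem lemma5p4:
  fixes \<phi> \<phi>' :: "nat \<Rightarrow> int" and i :: nat
  assumes "\<phi> \<in> Zp 11" and "\<phi>' \<in> Zp 11" and "\<phi> \<noteq> \<phi>'"
    and "zp_sub 11 (zp_sub 11 (zp_pow 11 \<phi> 2) \<phi>) (zp_of_int 11 1) = zp_of_int 11 0"
    and "zp_sub 11 (zp_sub 11 (zp_pow 11 \<phi>' 2) \<phi>') (zp_of_int 11 1) = zp_of_int 11 0"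
    and "i \<le> 9" and "i \<noteq> 5"
  shows "(\<forall>x\<in>Zp 11. \<exists>z. zp_sums 11 (fib_term 11 i \<phi> \<phi>' x) z)
       \<and> {z. \<exists>x\<in>Zp 11. zp_sums 11 (fib_term 11 i \<phi> \<phi>' x) z}
         = {z \<in> Zp 11. z 1 = int (fib i mod 11)}"
proof -
  interpret golden_roots_11 \<phi> \<phi>'
    using assms(1-5) by unfold_locales
  show ?thesis
    using assms(6,7) by (rule fib_series_image)
qed

end
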